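(* Let $\mathcal{G}=(\mathcal{V},\mathcal{E})$ be a directed graph with activation probabilities $p_{(u,v)}\in[0,1]$ for each edge $(u,v)\in\mathcal{E}$, and let $\mathbf{P}\in[0,1]^{|\mathcal{V}|\times|\mathcal{V}|}$ be the activation probability matrix, whose $(u,v)$-entry is $p_{(u,v)}$ if $(u,v)\in\mathcal{E}$ and $0$ otherwise. Fix a seed set $S\subseteq\mathcal{V}$ and consider the independent cascade process started from $S$. For $i\ge 0$ let $\boldsymbol{\pi}_i\in[0,1]^{|\mathcal{V}|}$ be the row vector whose $x$-entry is $\rho_i(x)$, the probability that node $x$ is infected at some step $\le i$. Then for all $i\geq 2$, $$\boldsymbol{\pi}_i \le \mathbf{u}_i := \boldsymbol{\pi}_{i-1} + (\boldsymbol{\pi}_{i-1}-\boldsymbol{\pi}_{i-2})\mathbf{P}$$ entrywise, i.e., for every $v\in\mathcal{V}$, $\rho_i(v)\le \rho_{i-1}(v)+\sum_{u:(u,v)\in\mathcal{E}}(\rho_{i-1}(u)-\rho_{i-2}(u))\,p_{(u,v)}$.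
   Context: Independent cascade (IC) model: at step $0$ exactly the seed nodes in $S$ are infected. Whenever a node $u$ becomes newly infected at step $t$, it makes a single attempt, independently of everything else, to infect each out-neighbor $v$ (with $(u,v)\in\mathcal{E}$), succeeding with probability $p_{(u,v)}$; an uninfected $v$ infected by such a success becomes infected at step $t+1$. Infected nodes stay infected, and the process stops when no new nodes are infected. $\rho_i(x)$ denotes the probability that $x$ is infected during the first $i$ steps (steps $0,\dots,i$). *)

theory Defs
  imports "HOL-Probability.Probability"
begin

text \<open>Independent cascade with pre-sampled edge coins: the coin of edge (u,v) decides the
  (single) attempt of u on v, made when u becomes newly infected.  ic_state returns the pair
  (nodes infected at some step \<le> t, nodes newly infected at step t).\<close>

fun ic_state :: "('a \<times> 'a) set \<Rightarrow> 'a set \<Rightarrow> ('a \<times> 'a \<Rightarrow> bool) \<Rightarrow> nat \<Rightarrow> 'a set \<times> 'a set" where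
  "ic_state E S \<omega> 0 = (S, S)"
| "ic_state E S \<omega> (Suc t) =
     (let A = fst (ic_state E S \<omega> t); N = snd (ic_state E S \<omega> t);
          N' = {v. v \<notin> A \<and> (\<exists>u\<in>N. (u, v) \<in> E \<and> \<omega> (u, v))}
      in (A \<union> N', N'))"

definition infected_upto :: "('a \<times> 'a) set \<Rightarrow> 'a set \<Rightarrow> ('a \<times> 'a \<Rightarrow> bool) \<Rightarrow> nat \<Rightarrow> 'a set" where
  "infected_upto E S \<omega> i = fst (ic_state E S \<omega> i)"

definition coin_pmf :: "('a \<times> 'a) set \<Rightarrow> ('a \<times> 'a \<Rightarrow> real) \<Rightarrow> ('a \<times> 'a \<Rightarrow> bool) pmf" where
  "coin_pmf E p = Pi_pmf E False (\<lambda>e. bernoulli_pmf (p e))"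

definition rho :: "('a \<times> 'a) set \<Rightarrow> ('a \<times> 'a \<Rightarrow> real) \<Rightarrow> 'a set \<Rightarrow> nat \<Rightarrow> 'a \<Rightarrow> real" where
  "rho E p S i x = measure_pmf.prob (coin_pmf E p) {\<omega>. x \<in> infected_upto E S \<omega> i}"

definition act_matrix :: "('a \<times> 'a) set \<Rightarrow> ('a \<times> 'a \<Rightarrow> real) \<Rightarrow> 'a \<Rightarrow> 'a \<Rightarrow> real" where
  "act_matrix E p u v = (if (u, v) \<in> E then p (u, v) else 0)"

end

theory Submission
  imports Defs
begin

text \<open>A node v newly infected at step t+1 has an in-neighbour u newly infected at step t whose coin
  on (u,v) succeeded.  The coin of (u,v) is read only at the step in which u is newly infected, so
  the event "u newly infected at step t" does not depend on it and is therefore independent of it;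
  its probability is rho_t(u) - rho_(t-1)(u).  The union bound over u gives
  rho_(t+1)(v) - rho_t(v) \<le> \<Sum>_u (rho_t(u) - rho_(t-1)(u)) p_(u,v).\<close>

lemma measure_pair_pmf_Times:
  "measure_pmf.prob (pair_pmf M N) (A \<times> B) = measure_pmf.prob M A * measure_pmf.prob N B"
proof -
  have "measure_pmf.prob (pair_pmf M N) (A \<times> B)
      = measure_pmf.prob (pair_pmf M N) ((A \<inter> set_pmf M) \<times> (B \<inter> set_pmf N))"
    by (subst measure_Int_set_pmf[symmetric]) (auto intro!: arg_cong[where f = "measure_pmf.prob _"])
  also have "\<dots> = measure_pmf.prob M (A \<inter> set_pmf M) * measure_pmf.prob N (B \<inter> set_pmf N)"
    by (rule measure_pmf_prob_product) auto
  finally show ?thesis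
    by (simp add: measure_Int_set_pmf)
qed

lemma measure_Pi_pmf_Int_coordinate:
  assumes "finite A" and "a \<in> A"
    and B_indep: "\<And>f x. f(a := x) \<in> B \<longleftrightarrow> f \<in> B"
  shows "measure_pmf.prob (Pi_pmf A d Q) (B \<inter> {f. f a \<in> X})
           = measure_pmf.prob (Pi_pmf A d Q) B * measure_pmf.prob (Q a) X"
proof -
  define upd :: "'b \<times> ('a \<Rightarrow> 'b) \<Rightarrow> 'a \<Rightarrow> 'b" where "upd = (\<lambda>(y, f). f(a := y))"
  have "A = insert a (A - {a})"
    using \<open>a \<in> A\<close> by blast
  then have Pi_eq: "Pi_pmf A d Q = map_pmf upd (pair_pmf (Q a) (Pi_pmf (A - {a}) d Q))"
    unfolding upd_def by (metis Pi_pmf_insert \<open>finite A\<close> finite_Diff Diff_iff singletonI)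
  have "upd -` (B \<inter> {f. f a \<in> X}) = X \<times> B" and "upd -` B = UNIV \<times> B"
    using B_indep by (auto simp: upd_def)
  then show ?thesis
    unfolding Pi_eq measure_map_pmf by (simp add: measure_pair_pmf_Times)
qed

definition newly_infected :: "('a \<times> 'a) set \<Rightarrow> 'a set \<Rightarrow> ('a \<times> 'a \<Rightarrow> bool) \<Rightarrow> nat \<Rightarrow> 'a set" where
  "newly_infected E S w t = snd (ic_state E S w t)"

lemma newly_infected_Suc:
  "newly_infected E S w (Suc t) =
     {v. v \<notin> infected_upto E S w t \<and> (\<exists>u\<in>newly_infected E S w t. (u, v) \<in> E \<and> w (u, v))}"
  by (simp add: newly_infected_def infected_upto_def Let_def)

lemma infected_upto_Suc:
  "infected_upto E S w (Suc t) = infected_upto E S w t \<union> newly_infected E S w (Suc t)"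
  by (simp add: newly_infected_def infected_upto_def Let_def)

lemma newly_infected_subset_infected_upto: "newly_infected E S w t \<subseteq> infected_upto E S w t"
  unfolding newly_infected_def infected_upto_def by (cases t) (auto simp: Let_def)

lemma infected_upto_mono: "s \<le> t \<Longrightarrow> infected_upto E S w s \<subseteq> infected_upto E S w t"
  by (induction t rule: dec_induct) (auto simp: infected_upto_Suc)

lemma not_newly_infected_before:
  assumes "u \<in> newly_infected E S w t" and "s < t"
  shows "u \<notin> newly_infected E S w s"
proof
  assume "u \<in> newly_infected E S w s"
  obtain t' where t: "t = Suc t'"
    using \<open>s < t\<close> by (cases t) auto
  have "infected_upto E S w s \<subseteq> infected_upto E S w t'"
    using \<open>s < t\<close> t by (intro infected_upto_mono) simp
  with \<open>u \<in> newly_infected E S w s\<close> have "u \<in> infected_upto E S w t'"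
    using newly_infected_subset_infected_upto[of E S w s] by blast
  with assms(1) show False
    unfolding t newly_infected_Suc by blast
qed

lemma ic_state_fun_upd_coin:
  assumes "\<And>s. s < t \<Longrightarrow> u \<notin> newly_infected E S w s"
  shows "ic_state E S (w((u, x) := b)) t = ic_state E S w t"
  using assms
proof (induction t)
  case (Suc t)
  have IH: "ic_state E S (w((u, x) := b)) t = ic_state E S w t"
    using Suc.prems by (intro Suc.IH) simp
  have "u \<notin> snd (ic_state E S w t)"
    using Suc.prems[of t] by (simp add: newly_infected_def)
  then have "{v. v \<notin> fst (ic_state E S w t)
               \<and> (\<exists>u'\<in>snd (ic_state E S w t). (u', v) \<in> E \<and> (w((u, x) := b)) (u', v))}
           = {v. v \<notin> fst (ic_state E S w t)
               \<and> (\<exists>u'\<in>snd (ic_state E S w t). (u', v) \<in> E \<and> w (u', v))}"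
    by auto
  then show ?case
    unfolding ic_state.simps Let_def IH by simp
qed simp

lemma newly_infected_fun_upd_coin:
  "u \<in> newly_infected E S (w((u, x) := b)) t \<longleftrightarrow> u \<in> newly_infected E S w t"
proof -
  have unchanged: "newly_infected E S (w'((u, x) := b')) t = newly_infected E S w' t"
    if "u \<in> newly_infected E S w' t" for w' b'
  proof -
    have "ic_state E S (w'((u, x) := b')) t = ic_state E S w' t"
      using not_newly_infected_before[OF that] by (intro ic_state_fun_upd_coin)
    then show ?thesis
      by (simp add: newly_infected_def)
  qed
  show ?thesis
  proof
    assume "u \<in> newly_infected E S (w((u, x) := b)) t"
    from unchanged[OF this, of "w (u, x)"] this show "u \<in> newly_infected E S w t"
      by simp
  next
    assume "u \<in> newly_infected E S w t"
    with unchanged[OF this] show "u \<in> newly_infected E S (w((u, x) := b)) t"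
      by simp
  qed
qed

lemma rho_Suc:
  "rho E p S (Suc t) x
     = rho E p S t x + measure_pmf.prob (coin_pmf E p) {w. x \<in> newly_infected E S w (Suc t)}"
proof -
  have "{w. x \<in> infected_upto E S w (Suc t)}
      = {w. x \<in> infected_upto E S w t} \<union> {w. x \<in> newly_infected E S w (Suc t)}"
    by (auto simp: infected_upto_Suc)
  moreover have "{w. x \<in> infected_upto E S w t} \<inter> {w. x \<in> newly_infected E S w (Suc t)} = {}"
    by (auto simp: newly_infected_Suc)
  ultimately show ?thesis
    unfolding rho_def by (simp add: measure_pmf.finite_measure_Union)
qed

lemma prob_newly_infected_and_coin:
  assumes "finite E" and "(u, v) \<in> E" and "0 \<le> p (u, v)" "p (u, v) \<le> 1"
  shows "measure_pmf.prob (coin_pmf E p) ({w. u \<in> newly_infected E S w t} \<inter> {w. w (u, v)})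
           = measure_pmf.prob (coin_pmf E p) {w. u \<in> newly_infected E S w t} * p (u, v)"
  using measure_Pi_pmf_Int_coordinate[OF assms(1,2), of "{w. u \<in> newly_infected E S w t}"
      False "\<lambda>e. bernoulli_pmf (p e)" "{True}"] assms(3,4)
  by (simp add: coin_pmf_def newly_infected_fun_upd_coin measure_pmf_single)

lemma prob_newly_infected_Suc_le:
  assumes "finite V" and E: "E \<subseteq> V \<times> V" and p: "\<And>e. e \<in> E \<Longrightarrow> 0 \<le> p e \<and> p e \<le> 1"
  shows "measure_pmf.prob (coin_pmf E p) {w. v \<in> newly_infected E S w (Suc t)}
           \<le> (\<Sum>u\<in>V. measure_pmf.prob (coin_pmf E p) {w. u \<in> newly_infected E S w t}
                       * act_matrix E p u v)"
proof -
  let ?P = "measure_pmf.prob (coin_pmf E p)"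
  define C where
    "C u = (if (u, v) \<in> E then {w. u \<in> newly_infected E S w t} \<inter> {w. w (u, v)} else {})" for u
  have "finite E"
    using assms(1) E by (meson finite_SigmaI finite_subset)
  have prob_C: "?P (C u) = ?P {w. u \<in> newly_infected E S w t} * act_matrix E p u v" for u
  proof (cases "(u, v) \<in> E")
    case True
    then show ?thesis
      using prob_newly_infected_and_coin[OF \<open>finite E\<close> True] p[OF True]
      by (simp add: C_def act_matrix_def)
  qed (simp add: C_def act_matrix_def)
  have "{w. v \<in> newly_infected E S w (Suc t)} \<subseteq> (\<Union>u\<in>V. C u)"
    using E by (fastforce simp: newly_infected_Suc C_def)
  then have "?P {w. v \<in> newly_infected E S w (Suc t)} \<le> ?P (\<Union>u\<in>V. C u)"
    by (rule measure_pmf.finite_measure_mono) simp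
  also have "\<dots> \<le> (\<Sum>u\<in>V. ?P (C u))"
    using assms(1) by (intro measure_pmf.finite_measure_subadditive_finite) auto
  finally show ?thesis
    by (simp add: prob_C)
qed

theorem theorem1:
  fixes V :: "'a set" and E :: "('a \<times> 'a) set" and p :: "'a \<times> 'a \<Rightarrow> real"
    and S :: "'a set" and i :: nat and v :: 'a
  assumes "finite V" and "E \<subseteq> V \<times> V"
    and "\<And>e. e \<in> E \<Longrightarrow> 0 \<le> p e \<and> p e \<le> 1"
    and "S \<subseteq> V" and "i \<ge> 2" and "v \<in> V"
  shows "rho E p S i v \<le> rho E p S (i - 1) v
           + (\<Sum>u\<in>V. (rho E p S (i - 1) u - rho E p S (i - 2) u) * act_matrix E p u v)"
proof -
  obtain k where i: "i = Suc (Suc k)"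
    using \<open>i \<ge> 2\<close> by (metis add_2_eq_Suc le_Suc_ex)
  have "rho E p S (Suc k) u - rho E p S k u
      = measure_pmf.prob (coin_pmf E p) {w. u \<in> newly_infected E S w (Suc k)}" for u
    by (simp add: rho_Suc)
  then show ?thesis
    using prob_newly_infected_Suc_le[OF assms(1-3), where v = v and S = S and t = "Suc k"]
      rho_Suc[of E p S "Suc k" v]
    by (simp add: i)
qed

end
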